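(* Let $(V,\nu,\tau,\tau^* )$ be a PN space in which $\nu(V)\subseteq D^+$ and $\tau(D^+\times D^+)\subseteq D^+$. Then every $D$-compact subset $A$ of $V$ is $D$-bounded and closed (in the strong topology).
   Context: $\Delta^{+}$ is the set of functions $F:[-\infty,+\infty]\to[0,1]$ that are left-continuous on $\mathbb{R}$, nondecreasing, with $F(0)=0$ and $F(+\infty)=1$, ordered pointwise; $D^{+}=\{F\in\Delta^{+}: l^{-}F(+\infty)=1\}$, where $l^{-}f(x)=\lim_{t\to x^{-}}f(t)$. $\varepsilon_0$ is the d.f. equal to $0$ for $x\le0$ and $1$ for $x>0$. A triangle function is a map $\tau:\Delta^+\times\Delta^+\to\Delta^+$ that is associative, commutative, nondecreasing in each argument, with unit $\varepsilon_0$. A PN space is a quadruple $(V,\nu,\tau,\tau^* )$ with $V$ a real vector space, $\tau\le\tau^*$ continuous triangle functions, and $\nu:V\to\Delta^+$ such that for all $p,q\in V$: (N1) $\nu_p=\varepsilon_0$ iff $p=\theta$; (N2) $\nu_{-p}=\nu_p$; (N3) $\nu_{p+q}\ge\tau(\nu_p,\nu_q)$; (N4) $\nu_p\le\tau^*(\nu_{\lambda p},\nu_{(1-\lambda)p})$ for all $\lambda\in[0,1]$. The strong topology on $V$ is generated by the neighborhoods $N_p(\lambda)=\{q\in V:\nu_{p-q}(\lambda)>1-\lambda\}$, $\lambda>0$; $(p_m)$ strongly converges to $p$ if for every $\lambda>0$ eventually $p_m\in N_p(\lambda)$. For nonempty $A\subseteq V$, $R_A(x)=l^{-}\inf\{\nu_q(x):q\in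 A\}$ for $x\in[0,+\infty)$ and $R_A(+\infty)=1$; $A$ is $D$-bounded if $R_A\in D^+$. A subset $A\subseteq V$ is $D$-compact if every sequence in $A$ has a subsequence strongly converging to a vector of $A$. *)

theory Defs
  imports "HOL-Analysis.Analysis"
begin

text \<open>Distribution functions are modelled as maps from the extended reals
  [-\<infinity>,+\<infinity>] to real numbers.\<close>

type_synonym dfun = "ereal \<Rightarrow> real"

definition Delta_plus :: "dfun set" where
  "Delta_plus = {F. (\<forall>x. 0 \<le> F x \<and> F x \<le> 1)
                 \<and> (\<forall>x::real. continuous (at_left x) (\<lambda>t. F (ereal t)))
                 \<and> mono F \<and> F 0 = 0 \<and> F PInfty = 1}"

definition D_plus :: "dfun set" where
  "D_plus = {F \<in> Delta_plus. ((\<lambda>t. F (ereal t)) \<longlongrightarrow> 1) at_top}"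

definition eps0 :: dfun where
  "eps0 = (\<lambda>x. if x \<le> 0 then 0 else 1)"

definition triangle_function :: "(dfun \<Rightarrow> dfun \<Rightarrow> dfun) \<Rightarrow> bool" where
  "triangle_function \<tau> \<longleftrightarrow>
     (\<forall>F\<in>Delta_plus. \<forall>G\<in>Delta_plus. \<tau> F G \<in> Delta_plus)
   \<and> (\<forall>F\<in>Delta_plus. \<forall>G\<in>Delta_plus. \<forall>H\<in>Delta_plus. \<tau> (\<tau> F G) H = \<tau> F (\<tau> G H))
   \<and> (\<forall>F\<in>Delta_plus. \<forall>G\<in>Delta_plus. \<tau> F G = \<tau> G F)
   \<and> (\<forall>F\<in>Delta_plus. \<forall>F'\<in>Delta_plus. \<forall>G\<in>Delta_plus. F \<le> F' \<longrightarrow> \<tau> F G \<le> \<tau> F' G)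
   \<and> (\<forall>F\<in>Delta_plus. \<tau> F eps0 = F)"

text \<open>Weak convergence in Delta_plus: convergence at every continuity point in (0,\<infinity>)
  of the limit (this topology is metrizable by the Sibley metric, so sequential
  continuity is continuity).\<close>

definition weak_conv :: "(nat \<Rightarrow> dfun) \<Rightarrow> dfun \<Rightarrow> bool" where
  "weak_conv Fs F \<longleftrightarrow> (\<forall>x::real. 0 < x \<longrightarrow> isCont (\<lambda>t. F (ereal t)) x \<longrightarrow>
       (\<lambda>n. Fs n (ereal x)) \<longlonglongrightarrow> F (ereal x))"

definition continuous_tf :: "(dfun \<Rightarrow> dfun \<Rightarrow> dfun) \<Rightarrow> bool" where
  "continuous_tf \<tau> \<longleftrightarrow> (\<forall>Fs Gs F G. (\<forall>n. Fs n \<in> Delta_plus) \<longrightarrow> (\<forall>n. Gs n \<in> Delta_plus)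
       \<longrightarrow> F \<in> Delta_plus \<longrightarrow> G \<in> Delta_plus \<longrightarrow> weak_conv Fs F \<longrightarrow> weak_conv Gs G
       \<longrightarrow> weak_conv (\<lambda>n. \<tau> (Fs n) (Gs n)) (\<tau> F G))"

definition PN_space :: "('a::real_vector \<Rightarrow> dfun) \<Rightarrow> (dfun \<Rightarrow> dfun \<Rightarrow> dfun)
                         \<Rightarrow> (dfun \<Rightarrow> dfun \<Rightarrow> dfun) \<Rightarrow> bool" where
  "PN_space \<nu> \<tau> \<tau>s \<longleftrightarrow>
     triangle_function \<tau> \<and> triangle_function \<tau>s \<and> continuous_tf \<tau> \<and> continuous_tf \<tau>s
   \<and> (\<forall>F\<in>Delta_plus. \<forall>G\<in>Delta_plus. \<tau> F G \<le> \<tau>s F G)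
   \<and> (\<forall>p. \<nu> p \<in> Delta_plus)
   \<and> (\<forall>p. \<nu> p = eps0 \<longleftrightarrow> p = 0)
   \<and> (\<forall>p. \<nu> (- p) = \<nu> p)
   \<and> (\<forall>p q. \<nu> (p + q) \<ge> \<tau> (\<nu> p) (\<nu> q))
   \<and> (\<forall>p. \<forall>l::real. 0 \<le> l \<and> l \<le> 1 \<longrightarrow> \<nu> p \<le> \<tau>s (\<nu> (l *\<^sub>R p)) (\<nu> ((1 - l) *\<^sub>R p)))"

definition strong_nbhd :: "('a::real_vector \<Rightarrow> dfun) \<Rightarrow> 'a \<Rightarrow> real \<Rightarrow> 'a set" where
  "strong_nbhd \<nu> p l = {q. \<nu> (p - q) (ereal l) > 1 - l}"

definition strong_open :: "('a::real_vector \<Rightarrow> dfun) \<Rightarrow> 'a set \<Rightarrow> bool" where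
  "strong_open \<nu> U \<longleftrightarrow> (\<forall>p\<in>U. \<exists>l>0. strong_nbhd \<nu> p l \<subseteq> U)"

definition strong_closed :: "('a::real_vector \<Rightarrow> dfun) \<Rightarrow> 'a set \<Rightarrow> bool" where
  "strong_closed \<nu> A \<longleftrightarrow> strong_open \<nu> (- A)"

definition strong_conv :: "('a::real_vector \<Rightarrow> dfun) \<Rightarrow> (nat \<Rightarrow> 'a) \<Rightarrow> 'a \<Rightarrow> bool" where
  "strong_conv \<nu> s p \<longleftrightarrow> (\<forall>l>0. eventually (\<lambda>m. s m \<in> strong_nbhd \<nu> p l) sequentially)"

definition prob_radius :: "('a::real_vector \<Rightarrow> dfun) \<Rightarrow> 'a set \<Rightarrow> dfun" where
  "prob_radius \<nu> A = (\<lambda>x. if x = PInfty then 1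
       else if x < 0 then 0
       else Lim (at_left (real_of_ereal x)) (\<lambda>t. Inf ((\<lambda>q. \<nu> q (ereal t)) ` A)))"

definition D_bounded :: "('a::real_vector \<Rightarrow> dfun) \<Rightarrow> 'a set \<Rightarrow> bool" where
  "D_bounded \<nu> A \<longleftrightarrow> prob_radius \<nu> A \<in> D_plus"

definition D_compact :: "('a::real_vector \<Rightarrow> dfun) \<Rightarrow> 'a set \<Rightarrow> bool" where
  "D_compact \<nu> A \<longleftrightarrow> (\<forall>s::nat \<Rightarrow> 'a. (\<forall>n. s n \<in> A) \<longrightarrow>
      (\<exists>(r::nat \<Rightarrow> nat) p. strict_mono r \<and> p \<in> A \<and> strong_conv \<nu> (s \<circ> r) p))"

end

(*
  Closedness: a point p in the strong closure of A is the strong limit of a sequence in A,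
  a subsequence of which converges to some a in A; strong limits are unique because
  nu (p - a) >= tau (nu (p - s n)) (nu (s n - a)), which tends weakly to tau eps0 eps0 = eps0.

  D-boundedness: otherwise there are e > 0 and q n in A with nu (q n) (n) < 1 - e/2 for all n.
  Let a in A be a strong limit of a subsequence and x a continuity point of nu a beyond which
  nu a > 1 - e/2. Then nu (q n) (x) >= tau (nu (q n - a)) (nu a) (x), which tends to nu a (x),
  contradicting nu (q n) (x) <= nu (q n) (n) once n >= x. So the infimum of the nu q over A
  tends to 1 at infinity, and so does its left limit, the probabilistic radius.
*)
theory Submission
  imports Defs
begin

lemma Delta_plus_bounds:
  assumes "F \<in> Delta_plus"
  shows "0 \<le> F x" and "F x \<le> 1"
  using assms by (simp_all add: Delta_plus_def)

lemma Delta_plus_mono: "F \<in> Delta_plus \<Longrightarrow> x \<le> y \<Longrightarrow> F x \<le> F y"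
  by (simp add: Delta_plus_def mono_def)

lemma Delta_plus_nonpos:
  assumes "F \<in> Delta_plus" and "x \<le> 0"
  shows "F x = 0"
proof -
  have "F x \<le> F 0" using Delta_plus_mono[OF assms] .
  moreover have "F 0 = 0" using assms(1) by (simp add: Delta_plus_def)
  ultimately show ?thesis using Delta_plus_bounds(1)[OF assms(1), of x] by linarith
qed

lemma Delta_plusI:
  fixes F :: dfun and \<psi> :: "real \<Rightarrow> real"
  assumes F_real: "\<And>t. F (ereal t) = \<psi> t" and "F MInfty = 0" and "F PInfty = 1"
    and \<psi>_bounds: "\<And>t. 0 \<le> \<psi> t" "\<And>t. \<psi> t \<le> 1"
    and "mono \<psi>" and "\<psi> 0 = 0"
    and \<psi>_left_cont: "\<And>x. (\<psi> \<longlongrightarrow> \<psi> x) (at_left x)"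
  shows "F \<in> Delta_plus"
proof -
  have bounds: "0 \<le> F x \<and> F x \<le> 1" for x
    by (cases x) (use assms in auto)
  have "mono F"
  proof
    fix x y :: ereal assume "x \<le> y"
    then show "F x \<le> F y"
      by (cases x; cases y) (use assms bounds in \<open>auto simp: mono_def\<close>)
  qed
  moreover have "continuous (at_left x) (\<lambda>t. F (ereal t))" for x :: real
    unfolding continuous_within F_real by (rule \<psi>_left_cont)
  ultimately show ?thesis
    using bounds assms unfolding Delta_plus_def by (simp add: zero_ereal_def)
qed

lemma eps0_in_Delta_plus: "eps0 \<in> Delta_plus"
proof (rule Delta_plusI)
  let ?\<psi> = "\<lambda>t::real. if t \<le> 0 then 0 else 1 :: real"
  show "eps0 (ereal t) = ?\<psi> t" for t by (simp add: eps0_def)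
  show "mono ?\<psi>" by (auto simp: mono_def)
  show "(?\<psi> \<longlongrightarrow> ?\<psi> x) (at_left x)" for x
  proof (rule tendsto_eventually)
    show "eventually (\<lambda>t. ?\<psi> t = ?\<psi> x) (at_left x)"
      by (rule eventually_at_leftI[of "if x \<le> 0 then x - 1 else 0"]) (auto split: if_splits)
  qed
qed (simp_all add: eps0_def)

lemma isCont_eps0: "0 < x \<Longrightarrow> isCont (\<lambda>t. eps0 (ereal t)) x"
proof -
  assume "0 < x"
  then have "eventually (\<lambda>t. eps0 (ereal t) = 1) (at x)"
    unfolding eventually_at by (intro exI[of _ x]) (auto simp: eps0_def dist_real_def)
  then show ?thesis
    using \<open>0 < x\<close> by (simp add: continuous_at eps0_def tendsto_eventually)
qed

lemma Delta_plus_eq_eps0I: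
  assumes "F \<in> Delta_plus" and one: "\<And>x. 0 < x \<Longrightarrow> F (ereal x) = 1"
  shows "F = eps0"
proof
  fix y :: ereal
  show "F y = eps0 y"
  proof (cases "y \<le> 0")
    case True
    then show ?thesis using Delta_plus_nonpos[OF assms(1)] by (simp add: eps0_def)
  next
    case False
    then show ?thesis
      by (cases y) (use assms(1) one in \<open>auto simp: eps0_def Delta_plus_def\<close>)
  qed
qed

lemma Delta_plus_continuity_point:
  assumes "F \<in> Delta_plus"
  obtains x where "X < x" and "isCont (\<lambda>t. F (ereal t)) x"
proof -
  have "mono (\<lambda>t. F (ereal t))"
    by (auto simp: mono_def intro: Delta_plus_mono[OF assms])
  from open_minus_countable[OF mono_ctble_discont[OF this], of "{X<..}"]
  show ?thesis using that by auto
qed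

lemma strong_nbhd_mono:
  assumes "\<forall>q. \<nu> q \<in> Delta_plus" and "l \<le> l'"
  shows "strong_nbhd \<nu> p l \<subseteq> strong_nbhd \<nu> p l'"
proof
  fix q assume "q \<in> strong_nbhd \<nu> p l"
  moreover have "\<nu> (p - q) (ereal l) \<le> \<nu> (p - q) (ereal l')"
    using Delta_plus_mono assms by simp
  ultimately show "q \<in> strong_nbhd \<nu> p l'" using assms(2) by (simp add: strong_nbhd_def)
qed

lemma strong_conv_subseq:
  assumes "strong_conv \<nu> s p" and "strict_mono r"
  shows "strong_conv \<nu> (s \<circ> r) p"
  using assms(1) eventually_subseq[OF assms(2)] by (simp add: strong_conv_def) blast

lemma strong_conv_tendsto_one:
  assumes "\<forall>q. \<nu> q \<in> Delta_plus" and "strong_conv \<nu> s p" and "0 < x"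
  shows "(\<lambda>n. \<nu> (p - s n) (ereal x)) \<longlonglongrightarrow> 1"
proof (rule order_tendstoI)
  fix c :: real assume "c < 1"
  define l where "l = min x (1 - c)"
  have "0 < l" using \<open>c < 1\<close> \<open>0 < x\<close> by (simp add: l_def)
  with assms(2) have "eventually (\<lambda>n. s n \<in> strong_nbhd \<nu> p l) sequentially"
    by (simp add: strong_conv_def)
  then show "eventually (\<lambda>n. c < \<nu> (p - s n) (ereal x)) sequentially"
  proof eventually_elim
    case (elim n)
    have "\<nu> (p - s n) (ereal l) \<le> \<nu> (p - s n) (ereal x)"
      using Delta_plus_mono assms(1) by (simp add: l_def)
    with elim show ?case by (simp add: strong_nbhd_def l_def)
  qed
next
  fix c :: real assume "1 < c"
  then show "eventually (\<lambda>n. \<nu> (p - s n) (ereal x) < c) sequentially"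
    using Delta_plus_bounds(2) assms(1) by (meson always_eventually le_less_trans)
qed

lemma PN_spaceD:
  assumes "PN_space \<nu> \<tau> \<tau>s"
  shows "triangle_function \<tau>" and "continuous_tf \<tau>" and "\<nu> p \<in> Delta_plus"
    and "\<nu> p = eps0 \<longleftrightarrow> p = 0" and "\<nu> (- p) = \<nu> p" and "\<tau> (\<nu> p) (\<nu> q) \<le> \<nu> (p + q)"
  using assms by (simp_all add: PN_space_def)

lemma strong_conv_weak_conv_eps0:
  assumes PN: "PN_space \<nu> \<tau> \<tau>s" and "strong_conv \<nu> s p"
  shows "weak_conv (\<lambda>n. \<nu> (p - s n)) eps0" and "weak_conv (\<lambda>n. \<nu> (s n - p)) eps0"
proof -
  show *: "weak_conv (\<lambda>n. \<nu> (p - s n)) eps0"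
    using strong_conv_tendsto_one[OF _ assms(2)] PN_spaceD(3)[OF PN]
    unfolding weak_conv_def by (simp add: eps0_def)
  have "\<nu> (s n - p) = \<nu> (p - s n)" for n
    using PN_spaceD(5)[OF PN, of "p - s n"] by simp
  with * show "weak_conv (\<lambda>n. \<nu> (s n - p)) eps0" by simp
qed

lemma weak_conv_tau_eps0:
  assumes "triangle_function \<tau>" and "continuous_tf \<tau>"
    and "\<And>n. Fs n \<in> Delta_plus" and "\<And>n. Gs n \<in> Delta_plus" and "G \<in> Delta_plus"
    and "weak_conv Fs eps0" and "weak_conv Gs G"
  shows "weak_conv (\<lambda>n. \<tau> (Fs n) (Gs n)) G"
proof -
  have "\<tau> eps0 G = G"
    using assms(1,5) eps0_in_Delta_plus unfolding triangle_function_def by metis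
  with assms(2)[unfolded continuous_tf_def, rule_format, OF assms(3,4) eps0_in_Delta_plus assms(5-7)]
  show ?thesis by simp
qed

lemma strong_conv_unique:
  assumes PN: "PN_space \<nu> \<tau> \<tau>s" and "strong_conv \<nu> s p" and "strong_conv \<nu> s a"
  shows "p = a"
proof -
  have w: "weak_conv (\<lambda>n. \<tau> (\<nu> (p - s n)) (\<nu> (s n - a))) eps0"
    by (rule weak_conv_tau_eps0[OF PN_spaceD(1,2,3,3)[OF PN] eps0_in_Delta_plus
        strong_conv_weak_conv_eps0(1)[OF PN assms(2)] strong_conv_weak_conv_eps0(2)[OF PN assms(3)]])
  have "\<nu> (p - a) (ereal x) = 1" if "0 < x" for x
  proof -
    have lim: "(\<lambda>n. \<tau> (\<nu> (p - s n)) (\<nu> (s n - a)) (ereal x)) \<longlonglongrightarrow> 1"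
      using w that isCont_eps0[OF that] unfolding weak_conv_def by (simp add: eps0_def)
    have "\<tau> (\<nu> (p - s n)) (\<nu> (s n - a)) (ereal x) \<le> \<nu> (p - a) (ereal x)" for n
      using PN_spaceD(6)[OF PN, of "p - s n" "s n - a"] by (simp add: le_fun_def)
    then have "1 \<le> \<nu> (p - a) (ereal x)" using LIMSEQ_le_const2[OF lim] by blast
    then show ?thesis using Delta_plus_bounds(2)[OF PN_spaceD(3)[OF PN]] by (meson antisym)
  qed
  then have "\<nu> (p - a) = eps0" by (rule Delta_plus_eq_eps0I[OF PN_spaceD(3)[OF PN]])
  then show "p = a" using PN_spaceD(4)[OF PN] by simp
qed

lemma strong_conv_eventually_less_nu:
  assumes PN: "PN_space \<nu> \<tau> \<tau>s" and "strong_conv \<nu> s a"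
    and "0 < x" and "isCont (\<lambda>t. \<nu> a (ereal t)) x" and "c < \<nu> a (ereal x)"
  shows "eventually (\<lambda>n. c < \<nu> (s n) (ereal x)) sequentially"
proof -
  have "weak_conv (\<lambda>n. \<tau> (\<nu> (s n - a)) (\<nu> a)) (\<nu> a)"
    by (rule weak_conv_tau_eps0[OF PN_spaceD(1,2,3,3,3)[OF PN]
        strong_conv_weak_conv_eps0(2)[OF PN assms(2)]]) (simp add: weak_conv_def)
  then have "(\<lambda>n. \<tau> (\<nu> (s n - a)) (\<nu> a) (ereal x)) \<longlonglongrightarrow> \<nu> a (ereal x)"
    using assms(3,4) unfolding weak_conv_def by blast
  from order_tendstoD(1)[OF this assms(5)] show ?thesis
  proof eventually_elim
    case (elim n)
    also have "\<tau> (\<nu> (s n - a)) (\<nu> a) (ereal x) \<le> \<nu> (s n) (ereal x)"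
      using PN_spaceD(6)[OF PN, of "s n - a" a] by (simp add: le_fun_def)
    finally show ?case .
  qed
qed

lemma strong_adherent_point_seq:
  assumes "\<forall>q. \<nu> q \<in> Delta_plus" and "\<And>l. 0 < l \<Longrightarrow> strong_nbhd \<nu> p l \<inter> A \<noteq> {}"
  obtains s where "\<And>n. s n \<in> A" and "strong_conv \<nu> s p"
proof -
  have "\<exists>q. q \<in> strong_nbhd \<nu> p (1 / Suc n) \<inter> A" for n :: nat
    using assms(2)[of "1 / Suc n"] by auto
  then obtain s where s: "\<And>n. s n \<in> strong_nbhd \<nu> p (1 / Suc n) \<inter> A" by metis
  have "strong_conv \<nu> s p"
    unfolding strong_conv_def
  proof (intro allI impI)
    fix l :: real assume "0 < l"
    then obtain N :: nat where N: "inverse (real (Suc N)) < l" using reals_Archimedean by blast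
    have "1 / real (Suc n) \<le> l" if "N \<le> n" for n
    proof -
      have "1 / real (Suc n) \<le> 1 / real (Suc N)" using that by (simp add: frac_le)
      with N show ?thesis by (simp add: inverse_eq_divide)
    qed
    then show "eventually (\<lambda>n. s n \<in> strong_nbhd \<nu> p l) sequentially"
      using s strong_nbhd_mono[OF assms(1)] unfolding eventually_sequentially by blast
  qed
  with s that show ?thesis by blast
qed

lemma D_compact_imp_strong_closed:
  assumes PN: "PN_space \<nu> \<tau> \<tau>s" and "D_compact \<nu> A"
  shows "strong_closed \<nu> A"
  unfolding strong_closed_def strong_open_def
proof (rule ballI, rule ccontr)
  fix p assume "p \<in> - A" and "\<not> (\<exists>l>0. strong_nbhd \<nu> p l \<subseteq> - A)"
  then have "strong_nbhd \<nu> p l \<inter> A \<noteq> {}" if "0 < l" for l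
    using that by blast
  moreover have "\<forall>q. \<nu> q \<in> Delta_plus" using PN_spaceD(3)[OF PN] by blast
  ultimately obtain s where s: "\<And>n. s n \<in> A" "strong_conv \<nu> s p"
    using strong_adherent_point_seq by blast
  then obtain r a where "strict_mono r" "a \<in> A" "strong_conv \<nu> (s \<circ> r) a"
    using assms(2) unfolding D_compact_def by blast
  moreover from this have "strong_conv \<nu> (s \<circ> r) p"
    using strong_conv_subseq[OF s(2)] by blast
  ultimately have "p = a" using strong_conv_unique[OF PN] by blast
  with \<open>p \<in> - A\<close> \<open>a \<in> A\<close> show False by simp
qed

definition left_sup :: "(real \<Rightarrow> real) \<Rightarrow> real \<Rightarrow> real" where
  "left_sup f x = Sup (f ` {..<x})"

lemma left_sup_ge: "bdd_above (range f) \<Longrightarrow> s < x \<Longrightarrow> f s \<le> left_sup f x"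
  unfolding left_sup_def by (rule cSup_upper) (auto intro: bdd_above_mono)

lemma left_sup_le: "(\<And>s. s < x \<Longrightarrow> f s \<le> c) \<Longrightarrow> left_sup f x \<le> c"
  unfolding left_sup_def by (rule cSup_least) auto

lemma mono_left_sup: "bdd_above (range f) \<Longrightarrow> mono (left_sup f)"
  unfolding left_sup_def mono_def by (auto intro!: cSup_subset_mono intro: bdd_above_mono)

lemma left_sup_continuous_left:
  assumes "bdd_above (range f)"
  shows "(left_sup f \<longlongrightarrow> left_sup f x) (at_left x)"
proof (rule order_tendstoI)
  fix c assume "c < left_sup f x"
  then obtain s where "s < x" and "c < f s"
    using less_cSupD[of "f ` {..<x}" c] unfolding left_sup_def by auto
  then show "eventually (\<lambda>t. c < left_sup f t) (at_left x)"
    using left_sup_ge[OF assms] by (intro eventually_at_leftI[OF _ \<open>s < x\<close>]) force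
next
  fix c assume "left_sup f x < c"
  show "eventually (\<lambda>t. left_sup f t < c) (at_left x)"
  proof (rule eventually_at_leftI[of "x - 1"])
    fix t assume "t \<in> {x - 1<..<x}"
    then have "left_sup f t \<le> left_sup f x" using monoD[OF mono_left_sup[OF assms]] by simp
    with \<open>left_sup f x < c\<close> show "left_sup f t < c" by simp
  qed simp
qed

lemma Lim_at_left_eq_left_sup:
  assumes "mono f" and "bdd_above (range f)"
  shows "Lim (at_left x) f = left_sup f x"
proof (rule tendsto_Lim)
  obtain M where "\<And>t. f t \<le> M" using assms(2) by (auto simp: bdd_above_def)
  then have "(f \<longlongrightarrow> Sup (f ` ({..<x} \<inter> UNIV))) (at x within {..<x} \<inter> UNIV)"
    using assms(1) by (intro Lim_left_bound[where K = M]) (auto simp: mono_def)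
  then show "(f \<longlongrightarrow> left_sup f x) (at_left x)" by (simp add: left_sup_def)
qed simp

definition inf_nu :: "('a::real_vector \<Rightarrow> dfun) \<Rightarrow> 'a set \<Rightarrow> real \<Rightarrow> real" where
  "inf_nu \<nu> A t = Inf ((\<lambda>q. \<nu> q (ereal t)) ` A)"

context
  fixes \<nu> :: "'a::real_vector \<Rightarrow> dfun" and A :: "'a set"
  assumes nu_A: "\<forall>q\<in>A. \<nu> q \<in> Delta_plus" and A_nonempty: "A \<noteq> {}"
begin

lemma inf_nu_le: "q \<in> A \<Longrightarrow> inf_nu \<nu> A t \<le> \<nu> q (ereal t)"
  unfolding inf_nu_def
  using nu_A Delta_plus_bounds(1) by (intro cInf_lower bdd_belowI[of _ 0]) auto

lemma inf_nu_less_iff: "inf_nu \<nu> A t < c \<longleftrightarrow> (\<exists>q\<in>A. \<nu> q (ereal t) < c)"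
  unfolding inf_nu_def
  using nu_A A_nonempty Delta_plus_bounds(1)
  by (subst cInf_less_iff) (auto intro: bdd_belowI[of _ 0])

lemma inf_nu_nonneg: "0 \<le> inf_nu \<nu> A t"
  using inf_nu_less_iff nu_A Delta_plus_bounds(1) by (meson not_le)

lemma inf_nu_le_one: "inf_nu \<nu> A t \<le> 1"
  using A_nonempty inf_nu_le nu_A Delta_plus_bounds(2) by (meson all_not_in_conv order_trans)

lemma inf_nu_nonpos: "t \<le> 0 \<Longrightarrow> inf_nu \<nu> A t = 0"
  using A_nonempty inf_nu_le inf_nu_nonneg nu_A Delta_plus_nonpos
  by (metis antisym ex_in_conv zero_ereal_def ereal_less_eq(3))

lemma mono_inf_nu: "mono (inf_nu \<nu> A)"
proof
  fix s t :: real assume "s \<le> t"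
  then have "inf_nu \<nu> A s \<le> \<nu> q (ereal t)" if "q \<in> A" for q
    using that inf_nu_le[of q s] Delta_plus_mono[of "\<nu> q" "ereal s" "ereal t"] nu_A by force
  then show "inf_nu \<nu> A s \<le> inf_nu \<nu> A t"
    using inf_nu_less_iff[of t] by (meson not_le)
qed

lemma bdd_above_inf_nu: "bdd_above (range (inf_nu \<nu> A))"
  using inf_nu_le_one by (auto simp: bdd_above_def)

lemma left_sup_inf_nu_bounds:
  shows "0 \<le> left_sup (inf_nu \<nu> A) t" and "left_sup (inf_nu \<nu> A) t \<le> 1"
  using left_sup_ge[OF bdd_above_inf_nu, of "t - 1" t] inf_nu_nonneg[of "t - 1"]
    left_sup_le[of t "inf_nu \<nu> A" 1] inf_nu_le_one by auto

lemma left_sup_inf_nu_nonpos: "t \<le> 0 \<Longrightarrow> left_sup (inf_nu \<nu> A) t = 0"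
  using left_sup_le[of t "inf_nu \<nu> A" 0] inf_nu_nonpos left_sup_inf_nu_bounds(1)[of t]
  by fastforce

lemma prob_radius_ereal: "prob_radius \<nu> A (ereal t) = left_sup (inf_nu \<nu> A) t"
proof (cases "t < 0")
  case True
  then show ?thesis using left_sup_inf_nu_nonpos by (simp add: prob_radius_def)
next
  case False
  then have "prob_radius \<nu> A (ereal t) = Lim (at_left t) (inf_nu \<nu> A)"
    by (simp add: prob_radius_def inf_nu_def[abs_def])
  then show ?thesis using Lim_at_left_eq_left_sup[OF mono_inf_nu bdd_above_inf_nu] by simp
qed

lemma prob_radius_in_Delta_plus: "prob_radius \<nu> A \<in> Delta_plus"
  by (rule Delta_plusI[where \<psi> = "left_sup (inf_nu \<nu> A)"])
    (simp_all add: prob_radius_ereal left_sup_inf_nu_bounds left_sup_inf_nu_nonpos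
      mono_left_sup[OF bdd_above_inf_nu] left_sup_continuous_left[OF bdd_above_inf_nu],
     simp_all add: prob_radius_def)

lemma D_boundedI:
  assumes "\<And>e. 0 < e \<Longrightarrow> \<exists>T. 1 - e < inf_nu \<nu> A T"
  shows "D_bounded \<nu> A"
proof -
  have "(left_sup (inf_nu \<nu> A) \<longlongrightarrow> 1) at_top"
  proof (rule order_tendstoI)
    fix c :: real assume "c < 1"
    then obtain T where T: "c < inf_nu \<nu> A T" using assms[of "1 - c"] by auto
    have "eventually (\<lambda>t. T < t) at_top" by (rule eventually_gt_at_top)
    then show "eventually (\<lambda>t. c < left_sup (inf_nu \<nu> A) t) at_top"
    proof eventually_elim
      case (elim t)
      with T left_sup_ge[OF bdd_above_inf_nu elim] show ?case by simp
    qed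
  next
    fix c :: real assume "1 < c"
    then show "eventually (\<lambda>t. left_sup (inf_nu \<nu> A) t < c) at_top"
      using left_sup_inf_nu_bounds(2) by (intro always_eventually) (meson le_less_trans)
  qed
  then show ?thesis
    using prob_radius_in_Delta_plus by (simp add: D_bounded_def D_plus_def prob_radius_ereal)
qed

end

lemma D_compact_inf_nu_tail:
  assumes PN: "PN_space \<nu> \<tau> \<tau>s" and nu_D: "\<forall>a\<in>A. \<nu> a \<in> D_plus"
    and "D_compact \<nu> A" and "A \<noteq> {}" and "0 < e"
  shows "\<exists>T. 1 - e < inf_nu \<nu> A T"
proof (rule ccontr)
  assume "\<nexists>T. 1 - e < inf_nu \<nu> A T"
  then have "inf_nu \<nu> A t \<le> 1 - e" for t by (simp add: not_less)
  then have "inf_nu \<nu> A (real n) < 1 - e / 2" for n :: nat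
    by (rule le_less_trans) (use \<open>0 < e\<close> in simp)
  moreover have "\<forall>q\<in>A. \<nu> q \<in> Delta_plus" using PN_spaceD(3)[OF PN] by blast
  ultimately have "\<exists>q\<in>A. \<nu> q (ereal (real n)) < 1 - e / 2" for n :: nat
    using inf_nu_less_iff[OF _ \<open>A \<noteq> {}\<close>] by blast
  then obtain s where s: "\<And>n. s n \<in> A" "\<And>n. \<nu> (s n) (ereal (real n)) < 1 - e / 2"
    by metis
  then obtain r a where r: "strict_mono r" and "a \<in> A" and conv: "strong_conv \<nu> (s \<circ> r) a"
    using assms(3) unfolding D_compact_def by blast
  have "((\<lambda>t. \<nu> a (ereal t)) \<longlongrightarrow> 1) at_top" using nu_D \<open>a \<in> A\<close> by (simp add: D_plus_def)
  from order_tendstoD(1)[OF this, of "1 - e / 2"] \<open>0 < e\<close>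
  obtain X where X: "\<And>t. X \<le> t \<Longrightarrow> 1 - e / 2 < \<nu> a (ereal t)"
    by (auto simp: eventually_at_top_linorder)
  obtain x where x: "max X 0 < x" "isCont (\<lambda>t. \<nu> a (ereal t)) x"
    using Delta_plus_continuity_point[OF PN_spaceD(3)[OF PN], of "max X 0"] by blast
  have "eventually (\<lambda>n. 1 - e / 2 < \<nu> (s (r n)) (ereal x)) sequentially"
    using strong_conv_eventually_less_nu[OF PN conv, of x "1 - e / 2"] x X by simp
  moreover have "eventually (\<lambda>n. x \<le> real (r n)) sequentially"
  proof (rule eventually_mono[OF eventually_ge_at_top[of "nat \<lceil>x\<rceil>"]])
    fix n assume "nat \<lceil>x\<rceil> \<le> n"
    then show "x \<le> real (r n)"
      using seq_suble[OF r, of n] real_nat_ceiling_ge[of x] by linarith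
  qed
  ultimately have "eventually (\<lambda>n. False) sequentially"
  proof eventually_elim
    case (elim n)
    have "\<nu> (s (r n)) (ereal x) \<le> \<nu> (s (r n)) (ereal (real (r n)))"
      using elim(2) Delta_plus_mono PN_spaceD(3)[OF PN] by simp
    with elim(1) s(2)[of "r n"] show False by simp
  qed
  then show False by simp
qed

theorem lemma24:
  fixes \<nu> :: "'a::real_vector \<Rightarrow> dfun" and \<tau> \<tau>s :: "dfun \<Rightarrow> dfun \<Rightarrow> dfun" and A :: "'a set"
  assumes "PN_space \<nu> \<tau> \<tau>s"
    and "\<forall>p. \<nu> p \<in> D_plus"
    and "\<forall>F\<in>D_plus. \<forall>G\<in>D_plus. \<tau> F G \<in> D_plus"
    and "A \<noteq> {}"
    and "D_compact \<nu> A"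
  shows "D_bounded \<nu> A \<and> strong_closed \<nu> A"
proof
  have "\<forall>q\<in>A. \<nu> q \<in> Delta_plus" using PN_spaceD(3)[OF assms(1)] by blast
  moreover have "\<exists>T. 1 - e < inf_nu \<nu> A T" if "0 < e" for e
    using D_compact_inf_nu_tail[OF assms(1) _ assms(5,4) that] assms(2) by blast
  ultimately show "D_bounded \<nu> A" using D_boundedI[OF _ assms(4)] by blast
  show "strong_closed \<nu> A" using D_compact_imp_strong_closed[OF assms(1,5)] .
qed

end
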